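(* Let $n>30$ with $n\equiv 0 \pmod 6$, and let the sets $\mathcal{H}_i$ of subgroups and $\Pi_i$ of permutations of $S_n$ ($-1\le i\le n/3-1$) be as defined in the context. Suppose $-1\le i<j\le n/3-1$, $H_i\in\mathcal{H}_i$ and $H_j\in\mathcal{H}_j$. Then $\Pi_i\cap H_j=\Pi_j\cap H_i=\emptyset$.
   Context: $S_n$ is the symmetric group on $\{1,\dots,n\}$, $n\equiv 0\pmod 6$. Subgroup classes: $\mathcal{H}_{-1}$ is the set of stabilizers in $S_n$ of partitions of $\{1,\dots,n\}$ into two blocks of size $n/2$ (a stabilizer may swap the two blocks); $\mathcal{H}_0=\{A_n\}$; for $1\le i\le n/3-1$, $\mathcal{H}_i$ is the set of setwise stabilizers in $S_n$ of $i$-element subsets of $\{1,\dots,n\}$. Permutation classes (cycle lengths listed, all of which together account for all $n$ points, so no further fixed points): $\Pi_{-1}$ is the set of $n$-cycles; $\Pi_0$ is the set of elements that are a product of two disjoint cycles of lengths $n/2-1$ and $n/2+1$ if $n/2$ is even, respectively of lengths $n/2-2$ and $n/2+2$ if $n/2$ is odd; $\Pi_1$ is the set of elements with exactly one fixed point and two further cycles of lengths $n/2-2$ and $n/2+1$; for odd $i$ with $3\le i\le n/3-1$, $\Pi_i$ is the set of products of three disjoint cycles of lengths $i$, $(n-i-1)/2$, $(n-i+1)/2$; for even $i$ with $2\le i\le n/3-1$ and $(n-i)/2$ odd, $\Pi_i$ is the set of products of three disjoint cycles of lengths $i,(n-i)/2,(n-i)/2$; for even $i$ with $4\le i\le n/3-1$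 and $(n-i)/2$ even, $\Pi_i$ is the set of products of three disjoint cycles of lengths $i,(n-i)/2-1,(n-i)/2+1$; if $(n-2)/2$ is even, $\Pi_2$ is the set of products of three disjoint cycles of lengths $2, n/2-4, n/2+2$. *)

theory Defs
  imports "HOL-Combinatorics.Permutations" "HOL-Library.Multiset"
begin

definition Sym :: "nat \<Rightarrow> (nat \<Rightarrow> nat) set" where
  "Sym n = {p. p permutes {1..n}}"

definition Alt :: "nat \<Rightarrow> (nat \<Rightarrow> nat) set" where
  "Alt n = {p. p permutes {1..n} \<and> evenperm p}"

definition orb :: "(nat \<Rightarrow> nat) \<Rightarrow> nat \<Rightarrow> nat set" where
  "orb p x = {(p ^^ k) x | k. True}"

definition cycle_type :: "nat \<Rightarrow> (nat \<Rightarrow> nat) \<Rightarrow> nat multiset" where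
  "cycle_type n p = image_mset card (mset_set {orb p x | x. x \<in> {1..n}})"

definition set_stab :: "nat \<Rightarrow> nat set \<Rightarrow> (nat \<Rightarrow> nat) set" where
  "set_stab n A = {p \<in> Sym n. p ` A = A}"

definition part_stab :: "nat \<Rightarrow> nat set \<Rightarrow> nat set \<Rightarrow> (nat \<Rightarrow> nat) set" where
  "part_stab n A B = {p \<in> Sym n. {p ` A, p ` B} = {A, B}}"

definition Hcal :: "nat \<Rightarrow> int \<Rightarrow> (nat \<Rightarrow> nat) set set" where
  "Hcal n i =
    (if i = -1 then
       {part_stab n A B | A B. A \<union> B = {1..n} \<and> A \<inter> B = {} \<and>
                             card A = n div 2 \<and> card B = n div 2}
     else if i = 0 then {Alt n}
     else if 1 \<le> i \<and> i \<le> int (n div 3) - 1 then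
       {set_stab n A | A. A \<subseteq> {1..n} \<and> card A = nat i}
     else {})"

text \<open>The prescribed cycle type for \<Pi>_i (undefined, i.e. no permutation, outside the range).\<close>
definition Pi_type :: "nat \<Rightarrow> int \<Rightarrow> nat multiset option" where
  "Pi_type n i =
    (let h = n div 2; k = nat i in
     if i = -1 then Some {#n#}
     else if i = 0 then
       (if even h then Some {#h - 1, h + 1#} else Some {#h - 2, h + 2#})
     else if i = 1 then Some {#1, h - 2, h + 1#}
     else if 2 \<le> i \<and> i \<le> int (n div 3) - 1 then
       (if odd k then
          (if 3 \<le> k then Some {#k, (n - k - 1) div 2, (n - k + 1) div 2#} else None)
        else if odd ((n - k) div 2) then Some {#k, (n - k) div 2, (n - k) div 2#}
        else if 4 \<le> k then Some {#k, (n - k) div 2 - 1, (n - k) div 2 + 1#}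
        else Some {#2, h - 4, h + 2#})
     else None)"

definition Pical :: "nat \<Rightarrow> int \<Rightarrow> (nat \<Rightarrow> nat) set" where
  "Pical n i = {p \<in> Sym n. Pi_type n i = Some (cycle_type n p)}"

end

theory Submission
  imports Defs "HOL-Combinatorics.Cycles" "HOL-Combinatorics.Orbits"
begin

text \<open>
  Membership in a subgroup of each class constrains the cycle type of a permutation of
  {1..n}: a setwise stabilizer of an i-set maps that set onto itself, so i is the total
  length of some of its cycles; a bisection stabilizer either fixes both blocks (so n/2 is
  such a subsum) or swaps them, and then every cycle alternates between the blocks and has
  even length; and a permutation is even iff n plus the number of its cycles is even.
  With n = 6m, every type in Pi_i with i >= 1 consists of an i-cycle and two cycles of
  length at least 2m other than 3m, one of the three being odd. So no subsum equals n/2 or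
  any j in [1, 2m) other than i, some cycle is odd, and the number of cycles is odd, which
  excludes every H_j with j different from i. The types in Pi_-1 and Pi_0 are excluded in
  the same way.
\<close>

lemma permutation_orbit_eq:
  assumes "permutation p" "y \<in> orbit p x"
  shows "orbit p y = orbit p x"
  using assms cyclic_on_orbit' orbit_cyclic_eq3 by metis

lemma permutation_orbit_eqI:
  assumes "permutation p" "z \<in> orbit p x" "z \<in> orbit p y"
  shows "orbit p x = orbit p y"
  using assms permutation_orbit_eq by metis

lemma permutation_orbit_image:
  assumes "permutation p"
  shows "p ` orbit p x = orbit p x"
proof (rule endo_inj_surj)
  show "finite (orbit p x)"
    using finite_orbit[OF permutation_self_in_orbit[OF assms]] .
  show "p ` orbit p x \<subseteq> orbit p x"
    by (auto intro: orbit.step)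
  show "inj_on p (orbit p x)"
    using assms by (meson bij_is_inj inj_on_subset permutation_bijective subset_UNIV)
qed

lemma evenperm_cycle_of_list:
  "distinct cs \<Longrightarrow> evenperm (cycle_of_list cs) \<longleftrightarrow> cs = [] \<or> odd (length cs)"
proof (induction cs rule: cycle_of_list.induct)
  case (1 i j cs)
  have "evenperm (cycle_of_list (i # j # cs)) \<longleftrightarrow> evenperm (transpose i j) = evenperm (cycle_of_list (j # cs))"
    unfolding cycle_of_list.simps(1) by (rule evenperm_comp[OF permutation_swap_id permutation_of_cycle])
  then show ?case using 1 by (simp add: evenperm_swap del: cycle_of_list.simps)
qed auto

lemma orbit_eq_set_support:
  assumes "permutation p"
  shows "orbit p x = set (support p x)"
  unfolding support_set[OF assms] orbit_altdef_permutation[OF assms] by blast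

lemma perm_restrict_orbit_eq_cycle:
  assumes "permutation p"
  shows "perm_restrict p (orbit p x) = cycle_of_list (support p x)"
  unfolding orbit_eq_set_support[OF assms]
  by (auto simp: perm_restrict_def fun_eq_iff cycle_restrict[OF assms] id_outside_supp)

lemma evenperm_perm_restrict_orbit:
  assumes "permutation p"
  shows "evenperm (perm_restrict p (orbit p x)) \<longleftrightarrow> odd (card (orbit p x))"
proof -
  have "card (orbit p x) = length (support p x)"
    unfolding orbit_eq_set_support[OF assms] by (rule distinct_card[OF cycle_of_permutation[OF assms]])
  moreover have "support p x \<noteq> []"
    using least_power_of_permutation(2)[OF assms] by simp
  ultimately show ?thesis
    using evenperm_cycle_of_list[OF cycle_of_permutation[OF assms]] perm_restrict_orbit_eq_cycle[OF assms]
    by simp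
qed

lemma orbit_perm_restrict_diff_orbit:
  assumes "permutation p" "p permutes S" "y \<in> S - orbit p x"
  shows "orbit (perm_restrict p (S - orbit p x)) y = orbit p y"
proof (rule orbit_cong)
  show "y \<in> orbit p y"
    using permutation_self_in_orbit[OF assms(1)] .
  fix z assume z: "z \<in> orbit p y"
  have "z \<in> S"
    using permutes_orbit_subset[OF assms(2)] assms(3) z by blast
  moreover have "z \<notin> orbit p x"
    using assms(3) z permutation_orbit_eqI[OF assms(1)] permutation_self_in_orbit[OF assms(1), of y]
    by blast
  ultimately show "perm_restrict p (S - orbit p x) z = p z"
    by (simp add: perm_restrict_simps)
qed

lemma card_orbits_perm_restrict_diff_orbit:
  assumes "permutation p" "p permutes S" "finite S" "x \<in> S"
  shows "card (orbit p ` S) = Suc (card (orbit (perm_restrict p (S - orbit p x)) ` (S - orbit p x)))"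
proof -
  have "orbit p y \<noteq> orbit p x \<longleftrightarrow> y \<notin> orbit p x" for y
    using permutation_orbit_eq[OF assms(1)] permutation_self_in_orbit[OF assms(1)] by metis
  then have "orbit p ` (S - orbit p x) = orbit p ` S - {orbit p x}"
    by blast
  moreover have "orbit (perm_restrict p (S - orbit p x)) ` (S - orbit p x) = orbit p ` (S - orbit p x)"
    using orbit_perm_restrict_diff_orbit[OF assms(1,2)] by (rule image_cong[OF refl])
  moreover have "orbit p x \<in> orbit p ` S" "card (orbit p ` S) > 0"
    using assms(3,4) by (auto simp: card_gt_0_iff)
  ultimately show ?thesis
    by (simp add: card_Diff_singleton)
qed

lemma evenperm_iff_card_orbits:
  assumes "p permutes S" "finite S"
  shows "evenperm p \<longleftrightarrow> even (card S + card (orbit p ` S))"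
  using assms
proof (induction "card S" arbitrary: S p rule: less_induct)
  case less
  show ?case
  proof (cases "S = {}")
    case True
    then show ?thesis using less.prems by (simp add: permutes_empty)
  next
    case False
    then obtain x where x: "x \<in> S" by blast
    have perm: "permutation p"
      using less.prems permutation_permutes by blast
    define C where "C = orbit p x"
    define q where "q = perm_restrict p (S - C)"
    have cyclic: "cyclic_on p C"
      unfolding C_def by (rule cyclic_on_orbit[OF less.prems])
    have C: "C \<subseteq> S" "x \<in> C" "finite C"
      unfolding C_def using permutes_orbit_subset[OF less.prems(1) x] permutation_self_in_orbit[OF perm]
      finite_subset less.prems(2) by auto
    have q: "q permutes S - C"
      unfolding q_def by (rule perm_restrict_diff_cyclic[OF less.prems(1) cyclic])
    have "q \<circ> perm_restrict p C = perm_restrict p ((S - C) \<union> C)"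
      unfolding q_def by (rule perm_restrict_comp[OF _ cyclic]) blast
    also have "\<dots> = p"
      using C(1) perm_restrict_id[OF less.prems(1)] by (simp add: Un_absorb2)
    finally have "q \<circ> perm_restrict p C = p" .
    moreover have "permutation q" "permutation (perm_restrict p C)"
      using q less.prems(2) permutation_permutes perm_restrict_orbit_eq_cycle[OF perm] permutation_of_cycle
      unfolding C_def by auto
    ultimately have "evenperm p \<longleftrightarrow> evenperm q = odd (card C)"
      using evenperm_comp[of q "perm_restrict p C"] evenperm_perm_restrict_orbit[OF perm, of x]
      unfolding C_def by simp
    moreover have "card (S - C) < card S"
      by (rule psubset_card_mono) (use C x less.prems(2) in auto)
    ultimately have "evenperm p \<longleftrightarrow> even (card (S - C) + card (orbit q ` (S - C))) = odd (card C)"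
      using less.hyps q less.prems(2) by simp
    moreover have "card (orbit p ` S) = Suc (card (orbit q ` (S - C)))"
      unfolding q_def C_def by (rule card_orbits_perm_restrict_diff_orbit[OF perm less.prems x])
    moreover have "card S = card (S - C) + card C"
      using C less.prems(2) by (simp add: card_Diff_subset card_mono)
    ultimately show ?thesis by auto
  qed
qed

definition has_subsum :: "nat multiset \<Rightarrow> nat \<Rightarrow> bool" where
  "has_subsum T k \<longleftrightarrow> (\<exists>M. M \<subseteq># T \<and> sum_mset M = k)"

lemma has_subsum_empty [simp]: "has_subsum {#} k \<longleftrightarrow> k = 0"
  by (auto simp: has_subsum_def)

lemma has_subsum_add_mset:
  "has_subsum (add_mset a T) k \<longleftrightarrow> has_subsum T k \<or> (a \<le> k \<and> has_subsum T (k - a))"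
proof
  assume "has_subsum (add_mset a T) k"
  then obtain M where M: "M \<subseteq># add_mset a T" "sum_mset M = k"
    by (auto simp: has_subsum_def)
  show "has_subsum T k \<or> (a \<le> k \<and> has_subsum T (k - a))"
  proof (cases "a \<in># M")
    case True
    then have "M - {#a#} \<subseteq># T" "sum_mset (M - {#a#}) = k - a" "a \<le> k"
      using M by (auto simp: subset_eq_diff_conv sum_mset.remove[OF True])
    then show ?thesis by (auto simp: has_subsum_def)
  next
    case False
    then have "M \<subseteq># T"
      using M(1) by (simp add: inter_add_left1 subset_mset.inf.absorb_iff2)
    then show ?thesis using M(2) by (auto simp: has_subsum_def)
  qed
next
  assume "has_subsum T k \<or> (a \<le> k \<and> has_subsum T (k - a))"
  then show "has_subsum (add_mset a T) k"
  proof
    assume "has_subsum T k"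
    moreover have "T \<subseteq># add_mset a T"
      by (simp add: subset_mset.less_imp_le)
    ultimately show ?thesis
      unfolding has_subsum_def using subset_mset.order_trans by blast
  next
    assume "a \<le> k \<and> has_subsum T (k - a)"
    then obtain M where "M \<subseteq># T" "sum_mset M = k - a" "a \<le> k"
      by (auto simp: has_subsum_def)
    then show ?thesis
      unfolding has_subsum_def by (intro exI[of _ "add_mset a M"]) auto
  qed
qed

lemma has_subsum_singleton: "has_subsum {#x#} k \<longleftrightarrow> k \<in> {0, x}"
  by (auto simp: has_subsum_add_mset)

lemma has_subsum_pair: "has_subsum {#x, y#} k \<longleftrightarrow> k \<in> {0, x, y, x + y}"
  by (auto simp: has_subsum_add_mset)

lemma has_subsum_triple:
  "has_subsum {#x, y, z#} k \<longleftrightarrow> k \<in> {0, x, y, z, x + y, x + z, y + z, x + y + z}"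
  by (auto simp: has_subsum_add_mset)

lemma orbit_subset_invariant:
  assumes "p ` A = A" "x \<in> A"
  shows "orbit p x \<subseteq> A"
proof
  fix y assume "y \<in> orbit p x"
  then show "y \<in> A" by induction (use assms in blast)+
qed

lemma has_subsum_card_invariant:
  assumes "p permutes S" "finite S" "A \<subseteq> S" "p ` A = A"
  shows "has_subsum (image_mset card (mset_set (orbit p ` S))) (card A)"
proof -
  have perm: "permutation p"
    using assms(1,2) permutation_permutes by blast
  have "\<Union> (orbit p ` A) = A"
    using orbit_subset_invariant[OF assms(4)] permutation_self_in_orbit[OF perm] by blast
  moreover have "pairwise disjnt (orbit p ` A)"
    by (auto simp: pairwise_def disjnt_def dest: permutation_orbit_eqI[OF perm])
  moreover have "finite Q" if "Q \<in> orbit p ` A" for Q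
    using that finite_orbit[OF permutation_self_in_orbit[OF perm]] by blast
  ultimately have "card A = sum card (orbit p ` A)"
    using card_Union_disjoint[of "orbit p ` A"] by simp
  also have "\<dots> = sum_mset (image_mset card (mset_set (orbit p ` A)))"
    by (rule sum_unfold_sum_mset)
  finally have "sum_mset (image_mset card (mset_set (orbit p ` A))) = card A" ..
  moreover have "mset_set (orbit p ` A) \<subseteq># mset_set (orbit p ` S)"
    using assms(2,3) by (intro subset_imp_msubset_mset_set) auto
  ultimately show ?thesis
    unfolding has_subsum_def by (blast intro: image_mset_subseteq_mono)
qed

lemma even_card_orbit_swap:
  assumes "p permutes S" "finite S" "A \<union> B = S" "A \<inter> B = {}" "p ` A = B" "x \<in> S"
  shows "even (card (orbit p x))"
proof -
  have perm: "permutation p"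
    using assms(1,2) permutation_permutes by blast
  have inj: "inj p"
    using perm by (simp add: permutation_bijective bij_is_inj)
  define Q where "Q = orbit p x"
  have "finite Q" "Q \<subseteq> S"
    unfolding Q_def using finite_orbit[OF permutation_self_in_orbit[OF perm]]
      permutes_orbit_subset[OF assms(1,6)] by auto
  have "p ` (Q \<inter> A) = Q \<inter> B"
    unfolding image_Int[OF inj] Q_def permutation_orbit_image[OF perm] assms(5) ..
  then have "card (Q \<inter> B) = card (Q \<inter> A)"
    using card_image inj by (metis inj_on_subset subset_UNIV)
  moreover have "Q = (Q \<inter> A) \<union> (Q \<inter> B)" "(Q \<inter> A) \<inter> (Q \<inter> B) = {}"
    using \<open>Q \<subseteq> S\<close> assms(3,4) by blast+
  then have "card Q = card (Q \<inter> A) + card (Q \<inter> B)"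
    using \<open>finite Q\<close> by (metis card_Un_disjoint finite_Int)
  ultimately show ?thesis
    unfolding Q_def by simp
qed

text \<open>The necessary condition on the cycle type T of an element of a subgroup in \<open>Hcal n b\<close>.\<close>

definition compatible_type :: "nat \<Rightarrow> int \<Rightarrow> nat multiset \<Rightarrow> bool" where
  "compatible_type n b T \<longleftrightarrow>
     (b = -1 \<longrightarrow> has_subsum T (n div 2) \<or> (\<forall>c\<in>#T. even c)) \<and>
     (b = 0 \<longrightarrow> even (n + size T)) \<and>
     (1 \<le> b \<longrightarrow> has_subsum T (nat b))"

lemma cycle_type_eq_orbits:
  assumes "p \<in> Sym n"
  shows "cycle_type n p = image_mset card (mset_set (orbit p ` {1..n}))"
proof -
  have "permutation p"
    using assms permutation_permutes by (auto simp: Sym_def)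
  then have "{orb p x | x. x \<in> {1..n}} = orbit p ` {1..n}"
    by (auto simp: orb_def orbit_altdef_permutation)
  then show ?thesis
    by (simp add: cycle_type_def)
qed

lemma Hcal_subset_Sym: "H \<in> Hcal n b \<Longrightarrow> H \<subseteq> Sym n"
  by (auto simp: Hcal_def Alt_def Sym_def part_stab_def set_stab_def split: if_splits)

lemma part_stab_cycle_type:
  assumes "p \<in> part_stab n A B" "A \<union> B = {1..n}" "A \<inter> B = {}" "card A = n div 2" "0 < n"
  shows "has_subsum (cycle_type n p) (n div 2) \<or> (\<forall>c\<in>#cycle_type n p. even c)"
proof -
  have p: "p permutes {1..n}" "p \<in> Sym n"
    using assms(1) by (auto simp: part_stab_def Sym_def)
  have "A \<noteq> B"
    using assms(2,3,5) by auto
  then consider "p ` A = A" | "p ` A = B"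
    using assms(1) by (auto simp: part_stab_def doubleton_eq_iff)
  then show ?thesis
  proof cases
    case 1
    then show ?thesis
      using has_subsum_card_invariant[OF p(1) _ _ 1] assms(2,4) cycle_type_eq_orbits[OF p(2)] by auto
  next
    case 2
    then show ?thesis
      using even_card_orbit_swap[OF p(1) _ assms(2,3) 2] cycle_type_eq_orbits[OF p(2)] by auto
  qed
qed

lemma cycle_type_compatible:
  assumes "H \<in> Hcal n b" "p \<in> H" "0 < n"
  shows "compatible_type n b (cycle_type n p)"
proof -
  have p: "p permutes {1..n}" "p \<in> Sym n"
    using Hcal_subset_Sym[OF assms(1)] assms(2) by (auto simp: Sym_def)
  note type = cycle_type_eq_orbits[OF p(2)]
  consider "b = -1" | "b = 0" | "1 \<le> b"
    using assms(1) by (auto simp: Hcal_def split: if_splits)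
  then show ?thesis
  proof cases
    case 1
    then obtain A B where "H = part_stab n A B" "A \<union> B = {1..n}" "A \<inter> B = {}"
      "card A = n div 2"
      using assms(1) by (auto simp: Hcal_def)
    then show ?thesis
      using 1 part_stab_cycle_type assms(2,3) by (simp add: compatible_type_def)
  next
    case 2
    then have "evenperm p"
      using assms(1,2) by (simp add: Hcal_def Alt_def)
    then show ?thesis
      using 2 evenperm_iff_card_orbits[OF p(1)] type by (simp add: compatible_type_def)
  next
    case 3
    then obtain A where "H = set_stab n A" "A \<subseteq> {1..n}" "card A = nat b"
      using assms(1) by (auto simp: Hcal_def split: if_splits)
    then show ?thesis
      using 3 assms(2) has_subsum_card_invariant[OF p(1), of A] type
      by (simp add: compatible_type_def set_stab_def)
  qed
qed

lemma three_cycle_type_incompatible: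
  assumes "k + x + y = 6 * m" "k < 2 * m" "2 * m \<le> x" "2 * m \<le> y" "x \<noteq> 3 * m" "y \<noteq> 3 * m"
    and "odd k \<or> odd x \<or> odd y"
    and "-1 \<le> b" "b < 2 * int m" "b \<noteq> int k"
  shows "\<not> compatible_type (6 * m) b {#k, x, y#}"
proof -
  consider "b = -1" | "b = 0" | "1 \<le> b"
    using assms(8) by linarith
  then show ?thesis
  proof cases
    case 1
    have "3 * m \<notin> {0, k, x, y, k + x, k + y, x + y, k + x + y}"
      using assms(1-6) by auto
    then show ?thesis using 1 assms(7) by (auto simp: compatible_type_def has_subsum_triple)
  next
    case 2
    then show ?thesis by (simp add: compatible_type_def)
  next
    case 3
    then have "nat b < x" "nat b < y" "nat b \<noteq> 0" "nat b \<noteq> k"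
      using assms(3,4,9,10) by linarith+
    then show ?thesis
      using 3 by (simp add: compatible_type_def has_subsum_triple)
  qed
qed

lemma Pi_type_three_cycles:
  assumes "Pi_type (6 * m) (int k) = Some T" "1 \<le> k" "k < 2 * m" "6 \<le> m"
  obtains x y where "T = {#k, x, y#}" "k + x + y = 6 * m" "2 * m \<le> x" "2 * m \<le> y"
    "x \<noteq> 3 * m" "y \<noteq> 3 * m" "odd k \<or> odd x \<or> odd y"
proof -
  have T: "Some T = (if k = 1 then Some {#1, 3 * m - 2, 3 * m + 1#}
      else if odd k then Some {#k, (6 * m - k - 1) div 2, (6 * m - k + 1) div 2#}
      else if odd ((6 * m - k) div 2) then Some {#k, (6 * m - k) div 2, (6 * m - k) div 2#}
      else if 4 \<le> k then Some {#k, (6 * m - k) div 2 - 1, (6 * m - k) div 2 + 1#}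
      else Some {#2, 3 * m - 4, 3 * m + 2#})"
    using assms unfolding Pi_type_def Let_def by (cases "k = 2") auto
  have "k = 1 \<or> (\<exists>t. k = 2 * t + 1 \<and> 1 \<le> t) \<or> (\<exists>t. k = 2 * t \<and> 1 \<le> t)"
    using assms(2) by presburger
  then consider (one) "k = 1" | (odd) t where "k = 2 * t + 1" "1 \<le> t"
    | (even) t where "k = 2 * t" "1 \<le> t"
    by blast
  then show ?thesis
  proof cases
    case one
    then show ?thesis
      using T assms(4) by (intro that[of "3 * m - 2" "3 * m + 1"]) auto
  next
    case (odd t)
    moreover have "(6 * m - k - 1) div 2 = 3 * m - t - 1" "(6 * m - k + 1) div 2 = 3 * m - t"
      using odd assms(3) by auto
    ultimately show ?thesis
      using T assms(3) by (intro that[of "3 * m - t - 1" "3 * m - t"]) auto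
  next
    case (even t)
    then have half: "(6 * m - k) div 2 = 3 * m - t"
      by simp
    consider (odd_half) "odd (3 * m - t)" | (even_half) "even (3 * m - t)" "2 \<le> t"
      | (two) "even (3 * m - t)" "t = 1"
      using even(2) by linarith
    then show ?thesis
    proof cases
      case odd_half
      then show ?thesis
        using T even half assms(3) by (intro that[of "3 * m - t" "3 * m - t"]) auto
    next
      case even_half
      then show ?thesis
        using T even half assms(3) by (intro that[of "3 * m - t - 1" "3 * m - t + 1"]) auto
    next
      case two
      then show ?thesis
        using T even half assms(4) by (intro that[of "3 * m - 4" "3 * m + 2"]) auto
    qed
  qed
qed

lemma Pi_type_incompatible:
  assumes "n > 30" "n mod 6 = 0" "Pi_type n a = Some T"
    and "-1 \<le> b" "b \<le> int (n div 3) - 1" "a \<noteq> b"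
  shows "\<not> compatible_type n b T"
proof -
  obtain m where n: "n = 6 * m" and m: "m \<ge> 6"
    using assms(1,2) by auto
  have b: "-1 \<le> b" "b < 2 * int m"
    using assms(4,5) n by simp_all
  have T: "Pi_type (6 * m) a = Some T"
    using assms(3) n by simp
  have a: "-1 \<le> a" "a < 2 * int m"
    using T m by (auto simp: Pi_type_def Let_def split: if_splits)
  then consider "a = -1" | "a = 0" | k where "a = int k" "1 \<le> k" "k < 2 * m"
  proof (cases "a \<le> 0")
    case False
    then show ?thesis
      using a that(3)[of "nat a"] by linarith
  qed (use that in linarith)
  then have "\<not> compatible_type (6 * m) b T"
  proof cases
    case 1
    then have "T = {#6 * m#}"
      using T by (simp add: Pi_type_def)
    then show ?thesis
      using assms(6) b 1 m by (auto simp: compatible_type_def has_subsum_singleton)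
  next
    case 2
    then have "T = (if even m then {#3 * m - 1, 3 * m + 1#} else {#3 * m - 2, 3 * m + 2#})"
      using T by (simp add: Pi_type_def Let_def split: if_splits)
    then show ?thesis
      using assms(6) b 2 m by (auto simp: compatible_type_def has_subsum_pair)
  next
    case (3 k)
    obtain x y where "T = {#k, x, y#}" "k + x + y = 6 * m" "2 * m \<le> x" "2 * m \<le> y"
      "x \<noteq> 3 * m" "y \<noteq> 3 * m" "odd k \<or> odd x \<or> odd y"
      using Pi_type_three_cycles[OF T[unfolded 3(1)] 3(2,3) m] .
    then show ?thesis
      using three_cycle_type_incompatible b assms(6) 3 by simp
  qed
  then show ?thesis
    using n by simp
qed

theorem lemma3p6:
  fixes n :: nat and i j :: int and Hi Hj :: "(nat \<Rightarrow> nat) set"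
  assumes "n > 30" and "n mod 6 = 0"
    and "-1 \<le> i" and "i < j" and "j \<le> int (n div 3) - 1"
    and "Hi \<in> Hcal n i" and "Hj \<in> Hcal n j"
  shows "Pical n i \<inter> Hj = {} \<and> Pical n j \<inter> Hi = {}"
proof -
  have disjoint: "Pical n a \<inter> H = {}"
    if "H \<in> Hcal n b" "-1 \<le> b" "b \<le> int (n div 3) - 1" "a \<noteq> b" for a b H
  proof (rule equals0I)
    fix p assume "p \<in> Pical n a \<inter> H"
    then have "Pi_type n a = Some (cycle_type n p)" "compatible_type n b (cycle_type n p)"
      using cycle_type_compatible[OF that(1)] assms(1) by (auto simp: Pical_def)
    then show False
      using Pi_type_incompatible[OF assms(1,2)] that(2-4) by blast
  qed
  show ?thesis
    using disjoint[OF assms(7)] disjoint[OF assms(6)] assms(3-5) by auto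
qed

end
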